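(* Let $\alpha>0$, $A\ge0$, $B>0$, $t>0$, and let $P_n(x,t)=x^n+\mathsf{p}_1(n,t)x^{n-1}+\cdots$ be the monic polynomials orthogonal on $[0,\infty)$ w.r.t. $w(x,t)=x^\alpha e^{-x}(A+B\theta(x-t))$, with norms $h_n(t)$, recurrence $zP_n=P_{n+1}+\alpha_nP_n+\beta_nP_{n-1}$, $\beta_n=h_n/h_{n-1}$, and $\mathsf{p}_1(0,t)=0$. Let $R_n(t)=Bt^\alpha e^{-t}\{P_n(t,t)\}^2/h_n(t)$ and $r_n(t)=Bt^\alpha e^{-t}P_n(t,t)P_{n-1}(t,t)/h_{n-1}(t)$. Then for $n\ge1$ $$t\sum_{j=0}^{n-1}R_j=-t\,r_n-n(n+\alpha)+\beta_n,\qquad \sum_{j=0}^{n-1}\alpha_j=-\mathsf{p}_1(n,t)=\beta_n-t\,r_n.$$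
   Context: $\theta$ is the Heaviside function ($1$ for $x>0$, $0$ otherwise); $P_n(t,t)$ is $P_n(x,t)$ at $x=t$. *)

theory Defs
  imports "HOL-Analysis.Analysis" "HOL-Computational_Algebra.Polynomial"
begin

definition heaviside :: "real \<Rightarrow> real" where
  "heaviside x = (if x > 0 then 1 else 0)"

definition wgt :: "real \<Rightarrow> real \<Rightarrow> real \<Rightarrow> real \<Rightarrow> real \<Rightarrow> real" where
  "wgt alpha A B t x = x powr alpha * exp (- x) * (A + B * heaviside (x - t))"

definition ip :: "real \<Rightarrow> real \<Rightarrow> real \<Rightarrow> real \<Rightarrow> real poly \<Rightarrow> real poly \<Rightarrow> real" where
  "ip alpha A B t p q = (LINT x:{0..}|lborel. poly p x * poly q x * wgt alpha A B t x)"

definition monic_OPS :: "real \<Rightarrow> real \<Rightarrow> real \<Rightarrow> real \<Rightarrow> (nat \<Rightarrow> real poly) \<Rightarrow> bool" where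
  "monic_OPS alpha A B t P \<longleftrightarrow>
     (\<forall>n. degree (P n) = n \<and> lead_coeff (P n) = 1) \<and>
     (\<forall>n m. m < n \<longrightarrow> ip alpha A B t (P n) (P m) = 0)"

end

theory Submission
  imports Defs "HOL-Real_Asymp.Real_Asymp"
begin

text \<open>Integrating the derivative of x^(alpha+1) e^(-x) p(x) against A + B theta(x - t) shows that,
  for every polynomial p, the weighted integral of x p equals that of x p' + (alpha + 1) p plus the
  boundary term B t^(alpha+1) e^(-t) p(t) coming from the jump of the weight at t.
  For p = P_j^2 and p = P_n P_(n-1) orthogonality evaluates every integral:
  t R_j = alpha_j - (2j + 1 + alpha) and t r_n = beta_n + p_1(n).
  Comparing coefficients in the recurrence gives alpha_j = p_1(j) - p_1(j+1), so both sums telescope.\<close>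

definition upper_Gamma :: "real \<Rightarrow> real \<Rightarrow> real" where
  "upper_Gamma s c = (LINT x:{c<..}|lborel. x powr (s - 1) * exp (- x))"

lemma set_integrable_powr_exp:
  fixes s c :: real
  assumes "s > 0" "c \<ge> 0"
  shows "set_integrable lborel {c<..} (\<lambda>x. x powr (s - 1) * exp (- x))"
proof -
  define f :: "real \<Rightarrow> real" where "f x = x powr (s - 1) * exp (- x)" for x
  have "f = (\<lambda>x. x powr (s - 1) / exp x)"
    by (simp add: f_def fun_eq_iff exp_minus field_simps)
  hence "(f has_integral Gamma s) {0..}"
    using Gamma_integral_real[OF assms(1)] by simp
  hence "f absolutely_integrable_on {0..}"
    by (intro nonnegative_absolutely_integrable_1) (auto simp: f_def integrable_on_def)
  moreover have "(\<lambda>x. indicator {0..} x *\<^sub>R f x) \<in> borel_measurable lborel"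
    unfolding f_def by measurable
  ultimately have "set_integrable lborel {0..} f"
    unfolding set_integrable_def using integrable_completion by blast
  thus ?thesis
    unfolding f_def by (rule set_integrable_subset) (use assms in auto)
qed

lemma upper_Gamma_plus_one:
  assumes s: "s > 0" and c: "c \<ge> 0"
  shows "upper_Gamma (s + 1) c = s * upper_Gamma s c + c powr s * exp (- c)"
proof -
  define F where "F x = x powr s * exp (- x)" for x :: real
  define f where "f x = s * (x powr (s - 1) * exp (- x)) - F x" for x
  have int_s: "set_integrable lborel {c<..} (\<lambda>x. x powr (s - 1) * exp (- x))"
    by (rule set_integrable_powr_exp[OF s c])
  have int_s1: "set_integrable lborel {c<..} F"
    unfolding F_def using set_integrable_powr_exp[of "s + 1" c] s c by simp
  have "(LBINT x=ereal c..\<infinity>. f x) = 0 - F c"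
  proof (rule interval_integral_FTC_integrable)
    show "set_integrable lborel (einterval (ereal c) \<infinity>) f"
      unfolding f_def einterval_eq_Ici using int_s int_s1 by (intro set_integral_diff) auto
    fix x assume "ereal c < ereal x"
    hence x: "x > 0" using c by auto
    have "(F has_real_derivative s * x powr (s - 1) * exp (- x) + x powr s * (exp (- x) * - 1)) (at x)"
      unfolding F_def by (intro derivative_eq_intros has_real_derivative_powr x) auto
    thus "(F has_vector_derivative f x) (at x)"
      by (simp add: f_def F_def has_real_derivative_iff_has_vector_derivative[symmetric] algebra_simps)
    show "isCont f x" unfolding f_def F_def using x by (intro continuous_intros) auto
  next
    have "(F \<longlongrightarrow> F c) (at_right c)"
    proof (cases "c = 0")
      case True
      thus ?thesis using s unfolding F_def by real_asymp
    next
      case False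
      hence "isCont F c" unfolding F_def using c by (intro continuous_intros) auto
      thus ?thesis by (simp add: isCont_def filterlim_at_split)
    qed
    thus "((F \<circ> real_of_ereal) \<longlongrightarrow> F c) (at_right (ereal c))"
      by (simp add: ereal_tendsto_simps1)
    have "(F \<longlongrightarrow> 0) at_top" unfolding F_def using s by real_asymp
    thus "((F \<circ> real_of_ereal) \<longlongrightarrow> 0) (at_left \<infinity>)"
      by (simp add: ereal_tendsto_simps1)
  qed simp
  moreover have "(LBINT x=ereal c..\<infinity>. f x) = s * upper_Gamma s c - upper_Gamma (s + 1) c"
    unfolding interval_lebesgue_integral_def f_def upper_Gamma_def F_def einterval_eq_Ici
    using int_s int_s1[unfolded F_def] by simp
  ultimately show ?thesis unfolding F_def by simp
qed

definition moment :: "real \<Rightarrow> real \<Rightarrow> real \<Rightarrow> real \<Rightarrow> nat \<Rightarrow> real" where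
  "moment alpha A B t k = (LINT x:{0..}|lborel. x ^ k * wgt alpha A B t x)"

lemma indicator_monomial_wgt:
  assumes "alpha > 0" "t > 0"
  shows "indicator {0..} x *\<^sub>R (x ^ k * wgt alpha A B t x) =
    A * (indicator {0<..} x *\<^sub>R (x powr (alpha + k) * exp (- x)))
    + B * (indicator {t<..} x *\<^sub>R (x powr (alpha + k) * exp (- x)))"
proof (cases "x > 0")
  case True
  hence "x ^ k * x powr alpha = x powr (alpha + k)"
    by (simp add: powr_add powr_realpow)
  hence "x ^ k * wgt alpha A B t x = x powr (alpha + k) * exp (- x) * (A + B * heaviside (x - t))"
    by (simp add: wgt_def mult.assoc[symmetric])
  thus ?thesis using True by (auto simp: heaviside_def indicator_def algebra_simps)
next
  case False
  thus ?thesis using assms by (cases "x = 0") (auto simp: indicator_def wgt_def)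
qed

lemma
  assumes "alpha > 0" "t > 0"
  shows set_integrable_monomial_wgt: "set_integrable lborel {0..} (\<lambda>x. x ^ k * wgt alpha A B t x)"
    and moment_eq_upper_Gamma:
      "moment alpha A B t k = A * upper_Gamma (alpha + k + 1) 0 + B * upper_Gamma (alpha + k + 1) t"
proof -
  have s: "alpha + real k + 1 > 0" "alpha + real k + 1 - 1 = alpha + k" using assms by auto
  have int_0: "integrable lborel (\<lambda>x. indicator {0<..} x *\<^sub>R (x powr (alpha + k) * exp (- x)))"
    using set_integrable_powr_exp[OF s(1), of 0] unfolding set_integrable_def s(2) by simp
  have int_t: "integrable lborel (\<lambda>x. indicator {t<..} x *\<^sub>R (x powr (alpha + k) * exp (- x)))"
    using set_integrable_powr_exp[OF s(1), of t] assms unfolding set_integrable_def s(2) by simp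
  note eq = indicator_monomial_wgt[OF assms, abs_def]
  show "set_integrable lborel {0..} (\<lambda>x. x ^ k * wgt alpha A B t x)"
    unfolding set_integrable_def eq using int_0 int_t by simp
  show "moment alpha A B t k = A * upper_Gamma (alpha + k + 1) 0 + B * upper_Gamma (alpha + k + 1) t"
    unfolding moment_def upper_Gamma_def set_lebesgue_integral_def eq s(2) using int_0 int_t by simp
qed

lemma moment_Suc:
  assumes "alpha > 0" "t > 0"
  shows "moment alpha A B t (Suc k) =
    (alpha + k + 1) * moment alpha A B t k + B * t powr (alpha + 1) * exp (- t) * t ^ k"
proof -
  define s where "s = alpha + k + 1"
  have s: "s > 0" using assms by (simp add: s_def)
  have "moment alpha A B t (Suc k) = A * upper_Gamma (s + 1) 0 + B * upper_Gamma (s + 1) t"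
    unfolding moment_eq_upper_Gamma[OF assms] s_def by simp
  also have "\<dots> = s * moment alpha A B t k + B * t powr s * exp (- t)"
    unfolding moment_eq_upper_Gamma[OF assms] s_def[symmetric]
    using upper_Gamma_plus_one[OF s, of 0] upper_Gamma_plus_one[OF s, of t] assms
    by (simp add: algebra_simps)
  also have "t powr s = t powr (alpha + 1) * t ^ k"
    using assms by (simp add: s_def powr_add powr_realpow[symmetric] algebra_simps)
  finally show ?thesis by (simp add: s_def)
qed

definition weighted_integral :: "real \<Rightarrow> real \<Rightarrow> real \<Rightarrow> real \<Rightarrow> real poly \<Rightarrow> real" where
  "weighted_integral alpha A B t p = (LINT x:{0..}|lborel. poly p x * wgt alpha A B t x)"

lemma ip_eq_weighted_integral: "ip alpha A B t p q = weighted_integral alpha A B t (p * q)"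
  by (simp add: ip_def weighted_integral_def)

lemma poly_eq_sum_upto:
  fixes p :: "'a::comm_semiring_1 poly"
  assumes "degree p \<le> N"
  shows "poly p x = (\<Sum>i\<le>N. coeff p i * x ^ i)"
proof -
  have "poly p x = poly (\<Sum>i\<le>N. monom (coeff p i) i) x"
    by (simp only: poly_as_sum_of_monoms'[OF assms])
  thus ?thesis by (simp only: poly_sum poly_monom)
qed

lemma
  assumes "alpha > 0" "t > 0"
  shows set_integrable_poly_wgt: "set_integrable lborel {0..} (\<lambda>x. poly p x * wgt alpha A B t x)"
    and weighted_integral_eq_moments: "degree p \<le> N \<Longrightarrow>
      weighted_integral alpha A B t p = (\<Sum>i\<le>N. coeff p i * moment alpha A B t i)"
proof -
  have int: "integrable lborel (\<lambda>x. indicator {0..} x *\<^sub>R (x ^ i * wgt alpha A B t x))" for i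
    using set_integrable_monomial_wgt[OF assms] unfolding set_integrable_def .
  have eq: "(\<lambda>x. indicator {0..} x *\<^sub>R (poly p x * wgt alpha A B t x)) =
      (\<lambda>x. \<Sum>i\<le>N. coeff p i * (indicator {0..} x *\<^sub>R (x ^ i * wgt alpha A B t x)))"
    if "degree p \<le> N" for N
    using poly_eq_sum_upto[OF that] by (simp add: fun_eq_iff sum_distrib_left sum_distrib_right mult_ac)
  show "set_integrable lborel {0..} (\<lambda>x. poly p x * wgt alpha A B t x)"
    unfolding set_integrable_def eq[OF order_refl] using int by auto
  show "weighted_integral alpha A B t p = (\<Sum>i\<le>N. coeff p i * moment alpha A B t i)"
    if "degree p \<le> N"
    unfolding weighted_integral_def moment_def set_lebesgue_integral_def eq[OF that]
    using int by simp
qed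

lemma weighted_integral_add:
  assumes "alpha > 0" "t > 0"
  shows "weighted_integral alpha A B t (p + q) = weighted_integral alpha A B t p + weighted_integral alpha A B t q"
  unfolding weighted_integral_def
  using set_integrable_poly_wgt[OF assms, of p] set_integrable_poly_wgt[OF assms, of q]
  by (simp add: distrib_right)

lemma weighted_integral_smult:
  "weighted_integral alpha A B t (smult c p) = c * weighted_integral alpha A B t p"
  by (simp add: weighted_integral_def mult.assoc)

lemma coeff_pCons_0_pderiv: "coeff (pCons 0 (pderiv p)) i = of_nat i * coeff p i"
  by (cases i) (simp_all add: coeff_pderiv)

lemma degree_pCons_0_pderiv_le: "degree (pCons 0 (pderiv p)) \<le> degree p"
  by (rule degree_le) (simp add: coeff_pCons_0_pderiv coeff_eq_0)

lemma weighted_integral_by_parts: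
  assumes "alpha > 0" "t > 0"
  shows "weighted_integral alpha A B t (pCons 0 p) =
    weighted_integral alpha A B t (pCons 0 (pderiv p)) + (alpha + 1) * weighted_integral alpha A B t p
    + B * t powr (alpha + 1) * exp (- t) * poly p t"
proof -
  let ?m = "moment alpha A B t" and ?C = "B * t powr (alpha + 1) * exp (- t)"
  define N where "N = degree p"
  have "weighted_integral alpha A B t (pCons 0 p) = (\<Sum>i\<le>Suc N. coeff (pCons 0 p) i * ?m i)"
    by (rule weighted_integral_eq_moments[OF assms]) (simp add: N_def)
  also have "\<dots> = (\<Sum>i\<le>N. coeff p i * ?m (Suc i))"
    by (subst sum.atMost_Suc_shift) simp
  also have "\<dots> = (\<Sum>i\<le>N. of_nat i * coeff p i * ?m i)
      + (alpha + 1) * (\<Sum>i\<le>N. coeff p i * ?m i) + ?C * (\<Sum>i\<le>N. coeff p i * t ^ i)"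
    by (simp add: moment_Suc[OF assms] sum.distrib sum_distrib_left algebra_simps)
  also have "\<dots> = weighted_integral alpha A B t (pCons 0 (pderiv p))
      + (alpha + 1) * weighted_integral alpha A B t p + ?C * poly p t"
    using weighted_integral_eq_moments[OF assms, of "pCons 0 (pderiv p)" N]
      weighted_integral_eq_moments[OF assms, of p N] degree_pCons_0_pderiv_le[of p]
    by (simp add: N_def coeff_pCons_0_pderiv poly_altdef)
  finally show ?thesis .
qed

lemma ip_commute: "ip alpha A B t p q = ip alpha A B t q p"
  by (simp add: ip_eq_weighted_integral mult.commute)

lemma ip_add_left:
  assumes "alpha > 0" "t > 0"
  shows "ip alpha A B t (p + q) r = ip alpha A B t p r + ip alpha A B t q r"
  by (simp add: ip_eq_weighted_integral distrib_right weighted_integral_add[OF assms])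

lemma ip_smult_left: "ip alpha A B t (smult c p) q = c * ip alpha A B t p q"
  by (simp add: ip_eq_weighted_integral weighted_integral_smult)

lemma ip_self_pos:
  assumes "alpha > 0" "t > 0" "A \<ge> 0" "B > 0" and "q \<noteq> 0"
  shows "ip alpha A B t q q > 0"
proof -
  define f where "f x = indicator {0..} x *\<^sub>R (poly (q * q) x * wgt alpha A B t x)" for x
  have f_int: "integrable lborel f"
    using set_integrable_poly_wgt[OF assms(1,2), of "q * q"] unfolding f_def set_integrable_def .
  have f_nonneg: "f x \<ge> 0" for x
    using assms by (auto simp: f_def wgt_def heaviside_def indicator_def)
  have ip_eq: "ip alpha A B t q q = integral\<^sup>L lborel f"
    unfolding f_def ip_def set_lebesgue_integral_def by simp
  have f_pos: "f x > 0" if "x \<in> {t<..<t + 1}" "poly q x \<noteq> 0" for x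
  proof -
    have "poly q x * poly q x > 0" "x powr alpha * exp (- x) * (A + B) > 0"
      using that assms by (auto simp: zero_less_mult_iff)
    thus ?thesis using that assms by (simp add: f_def wgt_def heaviside_def)
  qed
  have "AE x in lborel. poly q x \<noteq> 0"
    using AE_not_in[OF finite_imp_null_set_lborel[OF poly_roots_finite[OF assms(5)]]] by simp
  hence f_zero_outside: "AE x in lborel. f x = 0 \<longrightarrow> x \<notin> {t<..<t + 1}"
    by eventually_elim (use f_pos in force)
  have "integral\<^sup>L lborel f \<noteq> 0"
  proof
    assume "integral\<^sup>L lborel f = 0"
    hence "AE x in lborel. f x = 0"
      using integral_nonneg_eq_0_iff_AE[OF f_int] f_nonneg by simp
    with f_zero_outside have "AE x in lborel. x \<notin> {t<..<t + 1}"
      by eventually_elim simp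
    hence "emeasure lborel {t<..<t + 1} = 0"
      by (subst (asm) AE_iff_measurable[of "{t<..<t + 1}"]) auto
    thus False by simp
  qed
  moreover have "integral\<^sup>L lborel f \<ge> 0"
    using f_nonneg by simp
  ultimately show ?thesis by (simp add: ip_eq)
qed

lemma monic_OPS_degree: "monic_OPS alpha A B t P \<Longrightarrow> degree (P k) = k"
  by (simp add: monic_OPS_def)

lemma monic_OPS_coeff_self: "monic_OPS alpha A B t P \<Longrightarrow> coeff (P k) k = 1"
  unfolding monic_OPS_def by metis

lemma monic_OPS_orthogonal:
  assumes "monic_OPS alpha A B t P" "m \<noteq> n"
  shows "ip alpha A B t (P m) (P n) = 0"
  using assms ip_commute[of alpha A B t "P m" "P n"] unfolding monic_OPS_def
  by (cases "m < n") auto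

lemma monic_OPS_0: "monic_OPS alpha A B t P \<Longrightarrow> P 0 = 1"
  using degree_0_id[of "P 0"] by (simp add: monic_OPS_degree monic_OPS_coeff_self one_pCons)

lemma degree_diff_smult_monic_le:
  fixes p q :: "'a::comm_ring_1 poly"
  assumes "degree p \<le> Suc d" "degree q = Suc d" "coeff q (Suc d) = 1"
  shows "degree (p - smult (coeff p (Suc d)) q) \<le> d"
proof (rule degree_le, intro allI impI)
  fix i assume "d < i"
  then consider "i = Suc d" | "i > Suc d" by linarith
  thus "coeff (p - smult (coeff p (Suc d)) q) i = 0"
    by cases (use assms in \<open>simp_all add: coeff_eq_0\<close>)
qed

lemma monic_OPS_ip_lower_degree:
  assumes P: "monic_OPS alpha A B t P" and "alpha > 0" "t > 0" and "degree q < n"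
  shows "ip alpha A B t q (P n) = 0"
proof -
  have "ip alpha A B t q (P n) = 0" if "degree q \<le> d" "d < n" for d q
    using that
  proof (induction d arbitrary: q)
    case 0
    hence "q = smult (coeff q 0) (P 0)"
      using degree_0_id[of q] monic_OPS_0[OF P] by simp
    hence "ip alpha A B t q (P n) = coeff q 0 * ip alpha A B t (P 0) (P n)"
      by (metis ip_smult_left)
    thus ?case
      using monic_OPS_orthogonal[OF P, of 0 n] \<open>0 < n\<close> by simp
  next
    case (Suc d)
    define r where "r = q - smult (coeff q (Suc d)) (P (Suc d))"
    have "degree r \<le> d"
      unfolding r_def using Suc.prems monic_OPS_degree[OF P] monic_OPS_coeff_self[OF P]
      by (intro degree_diff_smult_monic_le) auto
    hence "ip alpha A B t r (P n) = 0" using Suc by simp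
    moreover have "q = r + smult (coeff q (Suc d)) (P (Suc d))" by (simp add: r_def)
    ultimately show ?case
      using monic_OPS_orthogonal[OF P, of "Suc d" n] \<open>Suc d < n\<close> assms(2,3)
      by (metis add.right_neutral ip_add_left ip_smult_left mult_zero_right less_irrefl)
  qed
  with assms show ?thesis by blast
qed

lemma monic_OPS_ip_projection:
  assumes P: "monic_OPS alpha A B t P" and "alpha > 0" "t > 0" and "degree r \<le> m"
  shows "ip alpha A B t r (P m) = coeff r m * ip alpha A B t (P m) (P m)"
proof (cases m)
  case 0
  hence "r = smult (coeff r m) (P m)"
    using assms degree_0_id[of r] monic_OPS_0[OF P] by simp
  thus ?thesis by (metis ip_smult_left)
next
  case (Suc d)
  define s where "s = r - smult (coeff r m) (P m)"
  have "degree s \<le> d"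
    unfolding s_def Suc using assms monic_OPS_degree[OF P] monic_OPS_coeff_self[OF P]
    by (intro degree_diff_smult_monic_le) (auto simp: Suc)
  hence "ip alpha A B t s (P m) = 0"
    using monic_OPS_ip_lower_degree[OF assms(1-3)] Suc by simp
  moreover have "r = s + smult (coeff r m) (P m)" by (simp add: s_def)
  ultimately show ?thesis
    using assms(2,3) by (metis add_0 ip_add_left ip_smult_left)
qed

lemma monic_OPS_ip_near_top:
  assumes P: "monic_OPS alpha A B t P" and "alpha > 0" "t > 0" and "degree q \<le> Suc m"
  shows "ip alpha A B t q (P m) =
    (coeff q m - coeff q (Suc m) * coeff (P (Suc m)) m) * ip alpha A B t (P m) (P m)"
proof -
  define r where "r = q - smult (coeff q (Suc m)) (P (Suc m))"
  have "degree r \<le> m"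
    unfolding r_def using assms monic_OPS_degree[OF P] monic_OPS_coeff_self[OF P]
    by (intro degree_diff_smult_monic_le) auto
  hence "ip alpha A B t r (P m) = coeff r m * ip alpha A B t (P m) (P m)"
    by (rule monic_OPS_ip_projection[OF assms(1-3)])
  moreover have "q = r + smult (coeff q (Suc m)) (P (Suc m))" by (simp add: r_def)
  moreover have "ip alpha A B t (P (Suc m)) (P m) = 0"
    using monic_OPS_orthogonal[OF P] by simp
  ultimately have "ip alpha A B t q (P m) = coeff r m * ip alpha A B t (P m) (P m)"
    using assms(2,3) by (metis add.right_neutral ip_add_left ip_smult_left mult_zero_right)
  thus ?thesis by (simp add: r_def)
qed

lemma monic_OPS_diagonal_identity:
  assumes P: "monic_OPS alpha A B t P" and a: "alpha > 0" "t > 0"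
  shows "B * t powr (alpha + 1) * exp (- t) * (poly (P j) t)\<^sup>2 =
    (coeff (pCons 0 (P j)) j - coeff (P (Suc j)) j - (2 * real j + 1 + alpha)) * ip alpha A B t (P j) (P j)"
proof -
  let ?ip = "ip alpha A B t" and ?I = "weighted_integral alpha A B t"
  have "?I (pCons 0 (P j * P j)) = ?ip (pCons 0 (P j)) (P j)"
    by (simp add: ip_eq_weighted_integral)
  also have "\<dots> = (coeff (pCons 0 (P j)) j - coeff (P (Suc j)) j) * ?ip (P j) (P j)"
    using monic_OPS_ip_near_top[OF P a, of "pCons 0 (P j)" j]
    by (simp add: monic_OPS_degree[OF P] monic_OPS_coeff_self[OF P])
  finally have x_term: "?I (pCons 0 (P j * P j)) = \<dots>" .
  have "pCons 0 (pderiv (P j * P j)) = pCons 0 (pderiv (P j)) * P j + pCons 0 (pderiv (P j)) * P j"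
    by (simp add: pderiv_mult algebra_simps)
  hence "?I (pCons 0 (pderiv (P j * P j))) = 2 * ?ip (pCons 0 (pderiv (P j))) (P j)"
    by (simp only: weighted_integral_add[OF a] ip_eq_weighted_integral mult_2)
  also have "\<dots> = 2 * real j * ?ip (P j) (P j)"
    using monic_OPS_ip_projection[OF P a, of "pCons 0 (pderiv (P j))" j]
      degree_pCons_0_pderiv_le[of "P j"]
    by (simp add: monic_OPS_degree[OF P] monic_OPS_coeff_self[OF P] coeff_pCons_0_pderiv)
  finally have deriv_term: "?I (pCons 0 (pderiv (P j * P j))) = \<dots>" .
  show ?thesis
    using weighted_integral_by_parts[OF a, of A B "P j * P j"] x_term deriv_term
    by (simp add: ip_eq_weighted_integral power2_eq_square algebra_simps)
qed

lemma monic_OPS_offdiagonal_identity: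
  assumes P: "monic_OPS alpha A B t P" and a: "alpha > 0" "t > 0"
  shows "B * t powr (alpha + 1) * exp (- t) * poly (P (Suc m)) t * poly (P m) t =
    ip alpha A B t (P (Suc m)) (P (Suc m)) + coeff (P (Suc m)) m * ip alpha A B t (P m) (P m)"
proof -
  let ?ip = "ip alpha A B t" and ?I = "weighted_integral alpha A B t"
  have "?I (pCons 0 (P (Suc m) * P m)) = ?ip (pCons 0 (P m)) (P (Suc m))"
    by (simp add: ip_eq_weighted_integral mult.commute)
  also have "\<dots> = ?ip (P (Suc m)) (P (Suc m))"
    using monic_OPS_ip_projection[OF P a, of "pCons 0 (P m)" "Suc m"]
    by (simp add: monic_OPS_degree[OF P] monic_OPS_coeff_self[OF P])
  finally have x_term: "?I (pCons 0 (P (Suc m) * P m)) = \<dots>" .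
  have "pCons 0 (pderiv (P (Suc m) * P m)) =
      pCons 0 (pderiv (P (Suc m))) * P m + pCons 0 (pderiv (P m)) * P (Suc m)"
    by (simp add: pderiv_mult algebra_simps)
  hence "?I (pCons 0 (pderiv (P (Suc m) * P m))) =
      ?ip (pCons 0 (pderiv (P (Suc m)))) (P m) + ?ip (pCons 0 (pderiv (P m))) (P (Suc m))"
    by (simp only: weighted_integral_add[OF a] ip_eq_weighted_integral)
  also have "?ip (pCons 0 (pderiv (P m))) (P (Suc m)) = 0"
    using monic_OPS_ip_lower_degree[OF P a] degree_pCons_0_pderiv_le[of "P m"]
    by (simp add: monic_OPS_degree[OF P])
  also have "?ip (pCons 0 (pderiv (P (Suc m)))) (P m) = - coeff (P (Suc m)) m * ?ip (P m) (P m)"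
    using monic_OPS_ip_near_top[OF P a, of "pCons 0 (pderiv (P (Suc m)))" m]
      degree_pCons_0_pderiv_le[of "P (Suc m)"]
    by (simp add: monic_OPS_degree[OF P] monic_OPS_coeff_self[OF P] coeff_pCons_0_pderiv coeff_pderiv algebra_simps)
  finally have deriv_term: "?I (pCons 0 (pderiv (P (Suc m) * P m))) = \<dots> + 0" .
  have "?I (P (Suc m) * P m) = 0"
    using monic_OPS_orthogonal[OF P, of "Suc m" m] by (simp add: ip_eq_weighted_integral)
  thus ?thesis
    using weighted_integral_by_parts[OF a, of A B "P (Suc m) * P m"] x_term deriv_term
    by (simp add: algebra_simps)
qed

theorem theorem2:
  fixes alpha A B t :: real and P :: "nat \<Rightarrow> real poly" and a :: "nat \<Rightarrow> real"
    and h :: "nat \<Rightarrow> real" and R r :: "nat \<Rightarrow> real" and n :: nat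
  assumes "alpha > 0" "A \<ge> 0" "B > 0" "t > 0"
    and "monic_OPS alpha A B t P"
    and h_def: "\<And>k. h k = ip alpha A B t (P k) (P k)"
    and rec0: "[:0, 1:] * P 0 = P 1 + smult (a 0) (P 0)"
    and rec: "\<And>k. k \<ge> 1 \<Longrightarrow>
       [:0, 1:] * P k = P (Suc k) + smult (a k) (P k) + smult (h k / h (k - 1)) (P (k - 1))"
    and R_def: "\<And>k. R k = B * t powr alpha * exp (- t) * (poly (P k) t)^2 / h k"
    and r_def: "\<And>k. r k = B * t powr alpha * exp (- t) * poly (P k) t * poly (P (k - 1)) t / h (k - 1)"
    and "n \<ge> 1"
  shows "t * (\<Sum>j<n. R j) = - t * r n - real n * (real n + alpha) + h n / h (n - 1)
         \<and> (\<Sum>j<n. a j) = - coeff (P n) (n - 1)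
         \<and> - coeff (P n) (n - 1) = h n / h (n - 1) - t * r n"
proof -
  note P = \<open>monic_OPS alpha A B t P\<close>
  have pos: "alpha > 0" "t > 0" using assms by auto
  have h_pos: "h k > 0" for k
    using ip_self_pos[OF pos assms(2,3), of "P k"] monic_OPS_coeff_self[OF P, of k] h_def[of k]
    by fastforce
  have t_powr: "t powr (alpha + 1) = t * t powr alpha"
    using pos by (simp add: powr_add)
  \<comment> \<open>s j is p_1(j); unlike coeff (P j) (j - 1), which truncates to coeff (P 0) 0 = 1, it is 0 at j = 0.\<close>
  define s where "s j = coeff (pCons 0 (P j)) j" for j
  have a_eq: "a j = s j - s (Suc j)" for j
  proof (cases j)
    case 0
    thus ?thesis using arg_cong[OF rec0, of "\<lambda>p. coeff p 0"]
      by (simp add: s_def monic_OPS_0[OF P])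
  next
    case (Suc i)
    have "coeff (P i) (Suc i) = 0"
      by (simp add: coeff_eq_0 monic_OPS_degree[OF P])
    thus ?thesis using arg_cong[OF rec[of j], of "\<lambda>p. coeff p j"] Suc
      by (simp add: s_def monic_OPS_coeff_self[OF P])
  qed
  have tR: "t * R j = s j - s (Suc j) - (2 * real j + 1 + alpha)" for j
    using monic_OPS_diagonal_identity[OF P pos, of j] h_pos[of j]
    unfolding R_def h_def[symmetric] t_powr s_def by (simp add: field_simps)
  obtain m where m: "n = Suc m" using \<open>n \<ge> 1\<close> by (cases n) auto
  have tr: "t * r n = h n / h (n - 1) + s n"
    using monic_OPS_offdiagonal_identity[OF P pos, of m] h_pos[of m]
    unfolding r_def h_def[symmetric] t_powr s_def m by (simp add: field_simps)
  have telescope: "(\<Sum>j<n. s j - s (Suc j)) = - s n"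
    using sum_lessThan_telescope'[of s n] by (simp add: s_def)
  have "(\<Sum>j<n. 2 * real j + 1 + alpha) = real n * (real n + alpha)"
    by (induction n) (simp_all add: algebra_simps)
  moreover have "t * (\<Sum>j<n. R j) = (\<Sum>j<n. s j - s (Suc j)) - (\<Sum>j<n. 2 * real j + 1 + alpha)"
    by (simp only: sum_distrib_left tR sum_subtractf)
  ultimately have "t * (\<Sum>j<n. R j) = - s n - real n * (real n + alpha)"
    by (simp only: telescope)
  moreover have "(\<Sum>j<n. a j) = - s n"
    by (simp add: a_eq telescope)
  moreover have "s n = coeff (P n) (n - 1)"
    by (simp add: s_def m)
  ultimately show ?thesis using tr by simp
qed

end
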